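(* Let $(X,\mathcal{A},\mu)$ be a $q$-measure space, let $A,B,C\in\mathcal{A}$ be mutually disjoint, and let $f\colon X\to\mathbb{R}$ be measurable such that $f\chi_A,f\chi_B,f\chi_C,f\chi_{A\cup B},f\chi_{A\cup C},f\chi_{B\cup C}$ are $\mu$-integrable. Then \[ \int_{A\cup B\cup C}f\,d\mu=\int_{A\cup B}f\,d\mu+\int_{A\cup C}f\,d\mu+\int_{B\cup C}f\,d\mu-\int_A f\,d\mu-\int_B f\,d\mu-\int_C f\,d\mu . \]
   Context: A $q$-measure space is a triple $(X,\mathcal{A},\mu)$ where $\mathcal{A}$ is a $\sigma$-algebra of subsets of $X$ and $\mu\colon\mathcal{A}\to[0,\infty)$ satisfies: (i) grade-2 additivity: $\mu(A\cup B\cup C)=\mu(A\cup B)+\mu(A\cup C)+\mu(B\cup C)-\mu(A)-\mu(B)-\mu(C)$ for mutually disjoint $A,B,C\in\mathcal{A}$; (ii) if $A_i\in\mathcal{A}$ is increasing then $\mu(\bigcup A_i)=\lim\mu(A_i)$; (iii) if $A_i\in\mathcal{A}$ is decreasing then $\mu(\bigcap A_i)=\lim\mu(A_i)$. For measurable $f$, $f$ is $\mu$-integrable if $\lambda\mapsto\mu(f^{-1}(\lambda,\infty))$ and $\lambda\mapsto\mu(f^{-1}(-\infty,-\lambda))$ have finite Lebesgue integral over $[0,\infty)$, and then $\int f\,d\mu=\int_0^\infty\mu(f^{-1}(\lambda,\infty))\,d\lambda-\int_0^\infty\mu(f^{-1}(-\infty,-\lambda))\,d\lambda$. For $A\in\mathcal{A}$,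 $\int_A f\,d\mu:=\int f\chi_A\,d\mu$, with $\chi_A$ the characteristic function of $A$. *)

theory Defs
  imports "HOL-Analysis.Analysis"
begin

definition qmeasure_space :: "'a measure \<Rightarrow> ('a set \<Rightarrow> real) \<Rightarrow> bool" where
  "qmeasure_space M \<mu> \<longleftrightarrow>
     (\<forall>A\<in>sets M. 0 \<le> \<mu> A) \<and>
     (\<forall>A\<in>sets M. \<forall>B\<in>sets M. \<forall>C\<in>sets M.
        A \<inter> B = {} \<and> A \<inter> C = {} \<and> B \<inter> C = {} \<longrightarrow>
        \<mu> (A \<union> B \<union> C) = \<mu> (A \<union> B) + \<mu> (A \<union> C) + \<mu> (B \<union> C) - \<mu> A - \<mu> B - \<mu> C) \<and>
     (\<forall>A::nat \<Rightarrow> 'a set. range A \<subseteq> sets M \<and> incseq A \<longrightarrow>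
        (\<lambda>i. \<mu> (A i)) \<longlonglongrightarrow> \<mu> (\<Union>i. A i)) \<and>
     (\<forall>A::nat \<Rightarrow> 'a set. range A \<subseteq> sets M \<and> decseq A \<longrightarrow>
        (\<lambda>i. \<mu> (A i)) \<longlonglongrightarrow> \<mu> (\<Inter>i. A i))"

definition q_integrable :: "'a measure \<Rightarrow> ('a set \<Rightarrow> real) \<Rightarrow> ('a \<Rightarrow> real) \<Rightarrow> bool" where
  "q_integrable M \<mu> f \<longleftrightarrow>
     f \<in> borel_measurable M \<and>
     set_integrable lborel {0..} (\<lambda>t. \<mu> {x \<in> space M. f x > t}) \<and>
     set_integrable lborel {0..} (\<lambda>t. \<mu> {x \<in> space M. f x < - t})"

definition q_integral :: "'a measure \<Rightarrow> ('a set \<Rightarrow> real) \<Rightarrow> ('a \<Rightarrow> real) \<Rightarrow> real" where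
  "q_integral M \<mu> f =
     (LINT t:{0..}|lborel. \<mu> {x \<in> space M. f x > t}) -
     (LINT t:{0..}|lborel. \<mu> {x \<in> space M. f x < - t})"

definition q_set_integral :: "'a measure \<Rightarrow> ('a set \<Rightarrow> real) \<Rightarrow> 'a set \<Rightarrow> ('a \<Rightarrow> real) \<Rightarrow> real" where
  "q_set_integral M \<mu> A f = q_integral M \<mu> (\<lambda>x. f x * indicator A x)"

end

theory Submission
  imports Defs
begin

(* For t \<ge> 0 the level sets of f\<chi>_S are traces on S of the level
   sets of f:  {f\<chi>_S > t} = {f > t} \<inter> S  and  {f\<chi>_S < -t} = {f < -t} \<inter> S.
   For a fixed measurable L, the trace S \<mapsto> \<mu>(L \<inter> S) of a q-measure is again
   grade-2 additive, so for every t \<ge> 0 the tail functions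
   t \<mapsto> \<mu>{f\<chi>_S > t} and t \<mapsto> \<mu>{f\<chi>_S < -t} satisfy the six-term identity
   pointwise in S = A, B, C.  Integrating over [0,\<infinity>), which is linear on
   integrable functions, gives the identity for both tail integrals, and the
   q-integral is their difference. *)

lemma qmeasure_grade2_additive:
  assumes "qmeasure_space M \<mu>"
    and "A \<in> sets M" "B \<in> sets M" "C \<in> sets M"
    and "A \<inter> B = {}" "A \<inter> C = {}" "B \<inter> C = {}"
  shows "\<mu> (A \<union> B \<union> C) = \<mu> (A \<union> B) + \<mu> (A \<union> C) + \<mu> (B \<union> C) - \<mu> A - \<mu> B - \<mu> C"
  using assms unfolding qmeasure_space_def by blast

lemma qmeasure_trace_grade2_additive:
  assumes q: "qmeasure_space M \<mu>" and L: "L \<in> sets M"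
    and sets: "A \<in> sets M" "B \<in> sets M" "C \<in> sets M"
    and disj: "A \<inter> B = {}" "A \<inter> C = {}" "B \<inter> C = {}"
  shows "\<mu> (L \<inter> (A \<union> B \<union> C)) = \<mu> (L \<inter> (A \<union> B)) + \<mu> (L \<inter> (A \<union> C)) + \<mu> (L \<inter> (B \<union> C))
     - \<mu> (L \<inter> A) - \<mu> (L \<inter> B) - \<mu> (L \<inter> C)"
proof -
  have "\<mu> (L \<inter> A \<union> L \<inter> B \<union> L \<inter> C) = \<mu> (L \<inter> A \<union> L \<inter> B) + \<mu> (L \<inter> A \<union> L \<inter> C)
     + \<mu> (L \<inter> B \<union> L \<inter> C) - \<mu> (L \<inter> A) - \<mu> (L \<inter> B) - \<mu> (L \<inter> C)"
    by (rule qmeasure_grade2_additive[OF q]) (use L sets disj in auto)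
  then show ?thesis
    by (simp add: Int_Un_distrib)
qed

text \<open>For a nonnegative threshold, the level sets of \<open>f \<chi>\<^sub>S\<close> are the level sets of f
  cut down to S (points outside S give the value 0, which never exceeds t).\<close>
lemma level_set_indicator_gt:
  fixes f :: "'a \<Rightarrow> real"
  assumes "t \<ge> 0"
  shows "{x \<in> space M. f x * indicator S x > t} = {x \<in> space M. f x > t} \<inter> S"
  using assms by (auto simp: indicator_def)

lemma level_set_indicator_lt:
  fixes f :: "'a \<Rightarrow> real"
  assumes "t \<ge> 0"
  shows "{x \<in> space M. f x * indicator S x < - t} = {x \<in> space M. f x < - t} \<inter> S"
  using assms by (auto simp: indicator_def)

lemma set_integral_six_term:
  fixes g gab gac gbc ga gb gc :: "real \<Rightarrow> real"
  assumes "set_integrable lborel {0..} gab" "set_integrable lborel {0..} gac"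
    "set_integrable lborel {0..} gbc" "set_integrable lborel {0..} ga"
    "set_integrable lborel {0..} gb" "set_integrable lborel {0..} gc"
    and eq: "\<And>t. t \<ge> 0 \<Longrightarrow> g t = gab t + gac t + gbc t - ga t - gb t - gc t"
  shows "(LINT t:{0..}|lborel. g t) = (LINT t:{0..}|lborel. gab t) + (LINT t:{0..}|lborel. gac t)
     + (LINT t:{0..}|lborel. gbc t) - (LINT t:{0..}|lborel. ga t) - (LINT t:{0..}|lborel. gb t)
     - (LINT t:{0..}|lborel. gc t)"
proof -
  have "(LINT t:{0..}|lborel. g t) =
        (LINT t:{0..}|lborel. gab t + gac t + gbc t - ga t - gb t - gc t)"
    by (rule set_lebesgue_integral_cong) (auto simp: eq)
  also have "\<dots> = (LINT t:{0..}|lborel. gab t) + (LINT t:{0..}|lborel. gac t)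
     + (LINT t:{0..}|lborel. gbc t) - (LINT t:{0..}|lborel. ga t) - (LINT t:{0..}|lborel. gb t)
     - (LINT t:{0..}|lborel. gc t)"
    using assms(1-6) by (simp add: set_integral_add set_integral_diff)
  finally show ?thesis .
qed

lemma tail_integral_grade2_additive:
  fixes g :: "'a set \<Rightarrow> real \<Rightarrow> real"
  assumes q: "qmeasure_space M \<mu>"
    and sets: "A \<in> sets M" "B \<in> sets M" "C \<in> sets M"
    and disj: "A \<inter> B = {}" "A \<inter> C = {}" "B \<inter> C = {}"
    and L: "\<And>t. t \<ge> 0 \<Longrightarrow> L t \<in> sets M"
    and trace: "\<And>S t. t \<ge> 0 \<Longrightarrow> g S t = \<mu> (L t \<inter> S)"
    and int: "set_integrable lborel {0..} (g (A \<union> B))" "set_integrable lborel {0..} (g (A \<union> C))"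
      "set_integrable lborel {0..} (g (B \<union> C))" "set_integrable lborel {0..} (g A)"
      "set_integrable lborel {0..} (g B)" "set_integrable lborel {0..} (g C)"
  shows "(LINT t:{0..}|lborel. g (A \<union> B \<union> C) t) =
     (LINT t:{0..}|lborel. g (A \<union> B) t) + (LINT t:{0..}|lborel. g (A \<union> C) t)
   + (LINT t:{0..}|lborel. g (B \<union> C) t) - (LINT t:{0..}|lborel. g A t)
   - (LINT t:{0..}|lborel. g B t) - (LINT t:{0..}|lborel. g C t)"
proof (rule set_integral_six_term[OF int])
  fix t :: real
  assume "t \<ge> 0"
  then show "g (A \<union> B \<union> C) t = g (A \<union> B) t + g (A \<union> C) t + g (B \<union> C) t - g A t - g B t - g C t"
    using qmeasure_trace_grade2_additive[OF q L sets disj] by (simp add: trace)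
qed

theorem corollary4p5:
  fixes M :: "'a measure" and \<mu> :: "'a set \<Rightarrow> real" and f :: "'a \<Rightarrow> real"
  assumes "qmeasure_space M \<mu>"
    and "A \<in> sets M" "B \<in> sets M" "C \<in> sets M"
    and "A \<inter> B = {}" "A \<inter> C = {}" "B \<inter> C = {}"
    and "f \<in> borel_measurable M"
    and "q_integrable M \<mu> (\<lambda>x. f x * indicator A x)"
    and "q_integrable M \<mu> (\<lambda>x. f x * indicator B x)"
    and "q_integrable M \<mu> (\<lambda>x. f x * indicator C x)"
    and "q_integrable M \<mu> (\<lambda>x. f x * indicator (A \<union> B) x)"
    and "q_integrable M \<mu> (\<lambda>x. f x * indicator (A \<union> C) x)"
    and "q_integrable M \<mu> (\<lambda>x. f x * indicator (B \<union> C) x)"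
  shows "q_set_integral M \<mu> (A \<union> B \<union> C) f =
           q_set_integral M \<mu> (A \<union> B) f + q_set_integral M \<mu> (A \<union> C) f
         + q_set_integral M \<mu> (B \<union> C) f
         - q_set_integral M \<mu> A f - q_set_integral M \<mu> B f - q_set_integral M \<mu> C f"
proof -
  note grade2 = tail_integral_grade2_additive[OF assms(1-7)]
  define upper where "upper S = (LINT t:{0..}|lborel. \<mu> {x \<in> space M. f x * indicator S x > t})"
    for S
  define lower where "lower S = (LINT t:{0..}|lborel. \<mu> {x \<in> space M. f x * indicator S x < - t})"
    for S
  have split: "q_set_integral M \<mu> S f = upper S - lower S" for S
    by (simp add: q_set_integral_def q_integral_def upper_def lower_def)
  have upper_sets: "{x \<in> space M. f x > t} \<in> sets M" for t
    using assms(8) by measurable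
  have lower_sets: "{x \<in> space M. f x < - t} \<in> sets M" for t
    using assms(8) by measurable
  have "upper (A \<union> B \<union> C) = upper (A \<union> B) + upper (A \<union> C) + upper (B \<union> C)
      - upper A - upper B - upper C"
    unfolding upper_def
    by (rule grade2[OF upper_sets, of "\<lambda>S t. \<mu> {x \<in> space M. f x * indicator S x > t}"])
      (use assms(9-14) in \<open>simp_all add: level_set_indicator_gt q_integrable_def\<close>)
  moreover have "lower (A \<union> B \<union> C) = lower (A \<union> B) + lower (A \<union> C) + lower (B \<union> C)
      - lower A - lower B - lower C"
    unfolding lower_def
    by (rule grade2[OF lower_sets, of "\<lambda>S t. \<mu> {x \<in> space M. f x * indicator S x < - t}"])
      (use assms(9-14) in \<open>simp_all add: level_set_indicator_lt q_integrable_def\<close>)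
  ultimately show ?thesis
    unfolding split by linarith
qed

end
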